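(* Let $M$ and $M'$ be two certification menus (of threshold certificates with transfers) with $M\subseteq M'$. Then $\operatorname{Wel}(M')-\operatorname{Rev}(M')\ge\operatorname{Wel}(M)-\operatorname{Rev}(M)$; that is, the total utility of consumers and producers under $M'$ is at least that under $M$, regardless of the transfers attached to the additional certificates.
   Context: Certification market: producers with types $\psi$ (atomless distribution $G$, compact support), consumers with types $\phi$ (atomless distribution $F$, compact support), quality $q\in[0,1]$; cost $g(q;\psi)$ weakly convex non-decreasing in $q$, $g(0;\psi)=0$; value $f(q;\phi)$ weakly concave non-decreasing in $q$, $f(0;\phi)=0$, $0\le f\le1$; strict single-crossing: for $\phi_1<\phi_2$, $q_1<q_2$: $f(q_2;\phi_2)-f(q_1;\phi_2)>f(q_2;\phi_1)-f(q_1;\phi_1)$, and for $\psi_1<\psi_2$, $q_1<q_2$: $g(q_2;\psi_2)-g(q_1;\psi_2)<g(q_2;\psi_1)-g(q_1;\psi_1)$. A menu is a set $\{(q_i,t_i)\}$ of threshold certificates $[q_i,1]$ with transfers $t_i$, always including $(0,0)$; the certifier incurs verification cost $c\ge0$ per non-trivial certificate; a producer choosing threshold $q_i$ produces at quality $q_i$. Producers choose certificates in equilibrium and then trade in a competitive (Walrasian) market equilibrium; in equilibrium producer $\psi$ trades with consumer $\phi(\psi)$, $F(\phi(\psi))=G(\psi)$, and picks the menu item maximizing $f(q_i;\phi(\psi))-g(q_i;\psi)-t_i$. $\operatorname{Rev}(M)$ is the certifier's equilibrium revenue (transfers minus verification costs) and $\operatorname{Wel}(M)$ is the equilibrium total utility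 of consumers, producers and certifier. *)

theory Defs
  imports "HOL-Probability.Probability"
begin

text \<open>A menu item is a pair (q, t): threshold certificate [q,1] with transfer t.
  Value f q phi, cost g q psi.\<close>

definition is_menu :: "(real \<times> real) set \<Rightarrow> bool" where
  "is_menu M \<longleftrightarrow> (0, 0) \<in> M \<and> (\<forall>(q, t) \<in> M. 0 \<le> q \<and> q \<le> 1)"

definition cdf_of :: "real measure \<Rightarrow> real \<Rightarrow> real" where
  "cdf_of M x = measure M {..x}"

definition type_distribution :: "real measure \<Rightarrow> bool" where
  "type_distribution M \<longleftrightarrow> prob_space M \<and> sets M = sets borel \<and>
     (\<forall>x. measure M {x} = 0) \<and> (\<exists>K. compact K \<and> (AE x in M. x \<in> K))"

definition value_fun :: "(real \<Rightarrow> real \<Rightarrow> real) \<Rightarrow> bool" where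
  "value_fun f \<longleftrightarrow>
     (\<forall>\<phi>. concave_on {0..1} (\<lambda>q. f q \<phi>) \<and> mono_on {0..1} (\<lambda>q. f q \<phi>) \<and> f 0 \<phi> = 0 \<and>
          (\<forall>q\<in>{0..1}. 0 \<le> f q \<phi> \<and> f q \<phi> \<le> 1)) \<and>
     (\<forall>\<phi>1 \<phi>2 q1 q2. \<phi>1 < \<phi>2 \<longrightarrow> q1 < q2 \<longrightarrow> q1 \<in> {0..1} \<longrightarrow> q2 \<in> {0..1} \<longrightarrow>
          f q2 \<phi>2 - f q1 \<phi>2 > f q2 \<phi>1 - f q1 \<phi>1)"

definition cost_fun :: "(real \<Rightarrow> real \<Rightarrow> real) \<Rightarrow> bool" where
  "cost_fun g \<longleftrightarrow>
     (\<forall>\<psi>. convex_on {0..1} (\<lambda>q. g q \<psi>) \<and> mono_on {0..1} (\<lambda>q. g q \<psi>) \<and> g 0 \<psi> = 0) \<and>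
     (\<forall>\<psi>1 \<psi>2 q1 q2. \<psi>1 < \<psi>2 \<longrightarrow> q1 < q2 \<longrightarrow> q1 \<in> {0..1} \<longrightarrow> q2 \<in> {0..1} \<longrightarrow>
          g q2 \<psi>2 - g q1 \<psi>2 < g q2 \<psi>1 - g q1 \<psi>1)"

text \<open>Joint surplus of producer psi (matched with consumer phi psi) from item (q,t).\<close>
definition surplus :: "(real \<Rightarrow> real \<Rightarrow> real) \<Rightarrow> (real \<Rightarrow> real \<Rightarrow> real) \<Rightarrow> (real \<Rightarrow> real)
    \<Rightarrow> real \<Rightarrow> real \<times> real \<Rightarrow> real" where
  "surplus f g \<phi> \<psi> m = f (fst m) (\<phi> \<psi>) - g (fst m) \<psi> - snd m"

definition equilibrium_choice :: "(real \<Rightarrow> real \<Rightarrow> real) \<Rightarrow> (real \<Rightarrow> real \<Rightarrow> real) \<Rightarrow> (real \<Rightarrow> real)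
    \<Rightarrow> (real \<times> real) set \<Rightarrow> (real \<Rightarrow> real \<times> real) \<Rightarrow> bool" where
  "equilibrium_choice f g \<phi> M \<sigma> \<longleftrightarrow>
     (\<forall>\<psi>. \<sigma> \<psi> \<in> M \<and> (\<forall>m\<in>M. surplus f g \<phi> \<psi> m \<le> surplus f g \<phi> \<psi> (\<sigma> \<psi>)))"

definition rev_integrand :: "real \<Rightarrow> (real \<Rightarrow> real \<times> real) \<Rightarrow> real \<Rightarrow> real" where
  "rev_integrand c \<sigma> \<psi> = snd (\<sigma> \<psi>) - (if fst (\<sigma> \<psi>) > 0 then c else 0)"

text \<open>Total utility of the matched consumer, the producer and the certifier (market prices
  paid by the consumer to the producer cancel).\<close>
definition wel_integrand :: "(real \<Rightarrow> real \<Rightarrow> real) \<Rightarrow> (real \<Rightarrow> real \<Rightarrow> real) \<Rightarrow> (real \<Rightarrow> real)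
    \<Rightarrow> real \<Rightarrow> (real \<Rightarrow> real \<times> real) \<Rightarrow> real \<Rightarrow> real" where
  "wel_integrand f g \<phi> c \<sigma> \<psi> =
     f (fst (\<sigma> \<psi>)) (\<phi> \<psi>) - g (fst (\<sigma> \<psi>)) \<psi> - (if fst (\<sigma> \<psi>) > 0 then c else 0)"

definition Rev :: "real measure \<Rightarrow> real \<Rightarrow> (real \<Rightarrow> real \<times> real) \<Rightarrow> real" where
  "Rev G c \<sigma> = (\<integral>\<psi>. rev_integrand c \<sigma> \<psi> \<partial>G)"

definition Wel :: "real measure \<Rightarrow> (real \<Rightarrow> real \<Rightarrow> real) \<Rightarrow> (real \<Rightarrow> real \<Rightarrow> real) \<Rightarrow> (real \<Rightarrow> real)
    \<Rightarrow> real \<Rightarrow> (real \<Rightarrow> real \<times> real) \<Rightarrow> real" where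
  "Wel G f g \<phi> c \<sigma> = (\<integral>\<psi>. wel_integrand f g \<phi> c \<sigma> \<psi> \<partial>G)"

end

theory Submission
  imports Defs
begin

text \<open>The transfers cancel in welfare minus revenue, which is therefore the integral of the
  surplus each producer obtains from its chosen certificate. A larger menu can only raise this
  maximised surplus producer by producer, so the inequality holds pointwise and needs none of
  the assumptions on the distributions, values or costs.\<close>

lemma wel_integrand_minus_rev_integrand:
  "wel_integrand f g \<phi> c \<sigma> \<psi> - rev_integrand c \<sigma> \<psi> = surplus f g \<phi> \<psi> (\<sigma> \<psi>)"
  unfolding wel_integrand_def rev_integrand_def surplus_def by simp

lemma Wel_minus_Rev:
  assumes "integrable G (wel_integrand f g \<phi> c \<sigma>)" and "integrable G (rev_integrand c \<sigma>)"
  shows "Wel G f g \<phi> c \<sigma> - Rev G c \<sigma> = (\<integral>\<psi>. surplus f g \<phi> \<psi> (\<sigma> \<psi>) \<partial>G)"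
  unfolding Wel_def Rev_def
  using assms by (simp add: Bochner_Integration.integral_diff [symmetric]
      wel_integrand_minus_rev_integrand)

lemma integrable_equilibrium_surplus:
  assumes "integrable G (wel_integrand f g \<phi> c \<sigma>)" and "integrable G (rev_integrand c \<sigma>)"
  shows "integrable G (\<lambda>\<psi>. surplus f g \<phi> \<psi> (\<sigma> \<psi>))"
  using Bochner_Integration.integrable_diff [OF assms]
  by (simp add: wel_integrand_minus_rev_integrand)

lemma equilibrium_surplus_mono_menu:
  assumes "equilibrium_choice f g \<phi> M \<sigma>" and "equilibrium_choice f g \<phi> M' \<sigma>'"
    and "M \<subseteq> M'"
  shows "surplus f g \<phi> \<psi> (\<sigma> \<psi>) \<le> surplus f g \<phi> \<psi> (\<sigma>' \<psi>)"
proof -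
  have "\<sigma> \<psi> \<in> M'"
    using assms(1,3) unfolding equilibrium_choice_def by blast
  then show ?thesis
    using assms(2) unfolding equilibrium_choice_def by blast
qed

theorem proposition4:
  fixes Gm Fm :: "real measure"
    and f g :: "real \<Rightarrow> real \<Rightarrow> real"
    and \<phi> :: "real \<Rightarrow> real"
    and c :: real
    and M M' :: "(real \<times> real) set"
    and \<sigma> \<sigma>' :: "real \<Rightarrow> real \<times> real"
  assumes G: "type_distribution Gm" and F: "type_distribution Fm"
    and f: "value_fun f" and g: "cost_fun g" and c: "c \<ge> 0"
    and match: "\<forall>\<psi>. cdf_of Fm (\<phi> \<psi>) = cdf_of Gm \<psi>"
    and M: "is_menu M" and M': "is_menu M'" and sub: "M \<subseteq> M'"
    and eq: "equilibrium_choice f g \<phi> M \<sigma>"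
    and eq': "equilibrium_choice f g \<phi> M' \<sigma>'"
    and int_rev: "integrable Gm (rev_integrand c \<sigma>)"
    and int_wel: "integrable Gm (wel_integrand f g \<phi> c \<sigma>)"
    and int_rev': "integrable Gm (rev_integrand c \<sigma>')"
    and int_wel': "integrable Gm (wel_integrand f g \<phi> c \<sigma>')"
  shows "Wel Gm f g \<phi> c \<sigma>' - Rev Gm c \<sigma>' \<ge> Wel Gm f g \<phi> c \<sigma> - Rev Gm c \<sigma>"
proof -
  have "(\<integral>\<psi>. surplus f g \<phi> \<psi> (\<sigma> \<psi>) \<partial>Gm) \<le> (\<integral>\<psi>. surplus f g \<phi> \<psi> (\<sigma>' \<psi>) \<partial>Gm)"
    using integrable_equilibrium_surplus [OF int_wel int_rev]
      integrable_equilibrium_surplus [OF int_wel' int_rev']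
      equilibrium_surplus_mono_menu [OF eq eq' sub]
    by (rule integral_mono)
  then show ?thesis
    by (simp add: Wel_minus_Rev int_wel int_rev int_wel' int_rev')
qed

end
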